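(* Let $n \ge 1$, let $C \subset \mathbb{R}^n$ be compact, let $f : C \to \mathbb{R}$ be continuous, and let $\epsilon > 0$. Then there exist a positive integer $k$, parameters $W_{ij} \in \mathbb{R}^n$, $b_{ij} \in \mathbb{R}$ for $i \in \{1,2\}$, $j \in \{1,\dots,k\}$, and output-layer parameters $u_1, u_2, c \in \mathbb{R}$ such that the maxout network with two maxout hidden units \[ g(v) = u_1 h_1(v) + u_2 h_2(v) + c, \qquad h_i(v) = \max_{j \in \{1,\dots,k\}} \left( v^T W_{ij} + b_{ij} \right), \] satisfies $|f(v) - g(v)| < \epsilon$ for all $v \in C$. That is, any continuous function on a compact domain can be approximated arbitrarily well by a maxout network with two maxout hidden units, provided each maxout unit may have arbitrarily many affine components $k$.
   Context: A maxout hidden unit with $k$ affine components, acting on an input $v \in \mathbb{R}^n$, computes $h(v) = \max_{j \in \{1,\dots,k\}} (v^T W_j + b_j)$ with learned parameters $W_j \in \mathbb{R}^n$, $b_j \in \mathbb{R}$; thus it is a convex piecewise linear function of $v$. A maxout network with two maxout hidden units consists of two such units $h_1, h_2$ (each with the same number $k$ of affine components) applied to the input $v$, followed by a linear (affine) output layer producing the real-valued output $g(v) = u_1 h_1(v) + u_2 h_2(v) + c$. *)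

theory Defs
  imports "HOL-Analysis.Analysis"
begin

definition maxout_unit :: "nat \<Rightarrow> (nat \<Rightarrow> real^'n) \<Rightarrow> (nat \<Rightarrow> real) \<Rightarrow> real^'n \<Rightarrow> real" where
  "maxout_unit k W b v = Max ((\<lambda>j. v \<bullet> W j + b j) ` {1..k})"

definition maxout_net2 ::
  "nat \<Rightarrow> (nat \<Rightarrow> nat \<Rightarrow> real^'n) \<Rightarrow> (nat \<Rightarrow> nat \<Rightarrow> real) \<Rightarrow> real \<Rightarrow> real \<Rightarrow> real \<Rightarrow> real^'n \<Rightarrow> real" where
  "maxout_net2 k W b u1 u2 c v =
     u1 * maxout_unit k (W 1) (b 1) v + u2 * maxout_unit k (W 2) (b 2) v + c"

end

theory Submission
  imports Defs
begin

(*
  Cover the compact set C by finitely many small balls with centres a in T and approximate f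
  by the lower envelope of downward cones,  max_{a in T} (f a - L * infnorm (v - a)):
  near v the nearest centre gives a value close to f v, while a steep enough slope L pushes
  every distant cone below f v. Each cone is a maximum of affine functions (infnorm is the
  maximum of the linear forms +-e_i), and with  S v = sum_{a in T} L * infnorm (v - a)  the
  envelope equals  max_a (f a + S v - L * infnorm (v - a)) - S v,  a difference of two convex
  piecewise linear functions. Each of these is a single maxout unit once k is at least its
  number of pieces.
*)

definition max_affine :: "('a::real_inner \<Rightarrow> real) \<Rightarrow> bool" where
  "max_affine h \<longleftrightarrow>
     (\<exists>A. finite A \<and> A \<noteq> {} \<and> (\<forall>v. h v = Max ((\<lambda>p. v \<bullet> fst p + snd p) ` A)))"

lemma max_affine_affine: "max_affine (\<lambda>v. v \<bullet> w + c)"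
  unfolding max_affine_def by (rule exI[of _ "{(w, c)}"]) simp

lemma max_affine_const: "max_affine (\<lambda>v. c)"
  using max_affine_affine[of 0 c] by simp

lemma Max_UN_image:
  fixes g :: "'b \<Rightarrow> 'c::linorder"
  assumes "finite T" "T \<noteq> {}" "\<And>t. t \<in> T \<Longrightarrow> finite (A t) \<and> A t \<noteq> {}"
  shows "Max (g ` (\<Union>t\<in>T. A t)) = Max ((\<lambda>t. Max (g ` A t)) ` T)"
proof (rule antisym)
  show "Max (g ` (\<Union>t\<in>T. A t)) \<le> Max ((\<lambda>t. Max (g ` A t)) ` T)"
  proof (rule Max.boundedI)
    fix y assume "y \<in> g ` (\<Union>t\<in>T. A t)"
    then obtain t x where "t \<in> T" "x \<in> A t" "y = g x" by blast
    then have "y \<le> Max (g ` A t)" using assms(3) by simp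
    also have "\<dots> \<le> Max ((\<lambda>t. Max (g ` A t)) ` T)" using \<open>t \<in> T\<close> assms(1) by simp
    finally show "y \<le> Max ((\<lambda>t. Max (g ` A t)) ` T)" .
  qed (use assms in auto)
  show "Max ((\<lambda>t. Max (g ` A t)) ` T) \<le> Max (g ` (\<Union>t\<in>T. A t))"
    using assms by (auto intro!: Max.boundedI Max_ge)
qed

lemma max_affine_Max:
  assumes "finite T" "T \<noteq> {}" "\<And>t. t \<in> T \<Longrightarrow> max_affine (h t)"
  shows "max_affine (\<lambda>v. Max ((\<lambda>t. h t v) ` T))"
proof -
  obtain A where A: "\<And>t. t \<in> T \<Longrightarrow> finite (A t) \<and> A t \<noteq> {} \<and>
      (\<forall>v. h t v = Max ((\<lambda>p. v \<bullet> fst p + snd p) ` A t))"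
    using assms(3) unfolding max_affine_def by metis
  have "Max ((\<lambda>t. h t v) ` T) = Max ((\<lambda>p. v \<bullet> fst p + snd p) ` (\<Union>t\<in>T. A t))" for v
  proof -
    have "(\<lambda>t. h t v) ` T = (\<lambda>t. Max ((\<lambda>p. v \<bullet> fst p + snd p) ` A t)) ` T"
      using A by simp
    also have "Max \<dots> = Max ((\<lambda>p. v \<bullet> fst p + snd p) ` (\<Union>t\<in>T. A t))"
      using assms(1,2) A by (simp add: Max_UN_image)
    finally show ?thesis .
  qed
  moreover have "finite (\<Union>t\<in>T. A t)" "(\<Union>t\<in>T. A t) \<noteq> {}"
    using assms(1,2) A by auto
  ultimately show ?thesis unfolding max_affine_def by blast
qed

lemma max_affine_add:
  assumes "max_affine g" "max_affine h"
  shows "max_affine (\<lambda>v. g v + h v)"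
proof -
  obtain A where A: "finite A" "A \<noteq> {}" "\<And>v. g v = Max ((\<lambda>p. v \<bullet> fst p + snd p) ` A)"
    using assms(1) unfolding max_affine_def by blast
  obtain B where B: "finite B" "B \<noteq> {}" "\<And>v. h v = Max ((\<lambda>q. v \<bullet> fst q + snd q) ` B)"
    using assms(2) unfolding max_affine_def by blast
  have sum_eq: "g v + h v = Max ((\<lambda>p. Max ((\<lambda>q. v \<bullet> (fst p + fst q) + (snd p + snd q)) ` B)) ` A)"
    for v
  proof -
    have "g v + h v = Max ((\<lambda>p. v \<bullet> fst p + snd p + h v) ` A)"
      using A by (simp add: Max_add_commute)
    also have "(\<lambda>p. v \<bullet> fst p + snd p + h v) ` A =
        (\<lambda>p. Max ((\<lambda>q. v \<bullet> (fst p + fst q) + (snd p + snd q)) ` B)) ` A"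
    proof (rule image_cong)
      fix p
      have "h v + (v \<bullet> fst p + snd p) = Max ((\<lambda>q. v \<bullet> fst q + snd q + (v \<bullet> fst p + snd p)) ` B)"
        using B by (simp add: Max_add_commute)
      then show "v \<bullet> fst p + snd p + h v = Max ((\<lambda>q. v \<bullet> (fst p + fst q) + (snd p + snd q)) ` B)"
        by (simp add: inner_add_right add_ac)
    qed simp
    finally show ?thesis .
  qed
  have shifted: "max_affine (\<lambda>v. Max ((\<lambda>q. v \<bullet> (fst p + fst q) + (snd p + snd q)) ` B))" for p
    unfolding max_affine_def using B by (intro exI[of _ "(+) p ` B"]) (auto simp: image_image)
  show ?thesis
    unfolding sum_eq by (rule max_affine_Max[OF A(1,2) shifted])
qed

lemma max_affine_sum:
  assumes "finite I" "\<And>i. i \<in> I \<Longrightarrow> max_affine (h i)"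
  shows "max_affine (\<lambda>v. \<Sum>i\<in>I. h i v)"
  using assms by (induction I rule: finite_induct) (auto intro: max_affine_const max_affine_add)

lemma infnorm_eq_Max_signed_Basis:
  fixes x :: "'a::euclidean_space"
  shows "infnorm x = Max ((\<bullet>) x ` (Basis \<union> uminus ` Basis))"
proof (rule antisym)
  show "infnorm x \<le> Max ((\<bullet>) x ` (Basis \<union> uminus ` Basis))"
    unfolding infnorm_Max
  proof (rule Max.boundedI)
    fix y assume "y \<in> (\<lambda>b. \<bar>x \<bullet> b\<bar>) ` Basis"
    then obtain b where b: "b \<in> Basis" "y = \<bar>x \<bullet> b\<bar>" by blast
    then have "x \<bullet> b \<in> (\<bullet>) x ` (Basis \<union> uminus ` Basis)"
      and "x \<bullet> (- b) \<in> (\<bullet>) x ` (Basis \<union> uminus ` Basis)"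
      by blast+
    then show "y \<le> Max ((\<bullet>) x ` (Basis \<union> uminus ` Basis))"
      using b by (auto simp: abs_if)
  qed simp_all
  show "Max ((\<bullet>) x ` (Basis \<union> uminus ` Basis)) \<le> infnorm x"
    using Basis_le_infnorm[of _ x] by (force intro!: Max.boundedI simp: abs_le_iff)
qed

lemma max_affine_infnorm_cone:
  fixes a :: "'a::euclidean_space"
  assumes "L \<ge> 0"
  shows "max_affine (\<lambda>v. L * infnorm (v - a))"
proof -
  have "L * infnorm (v - a) = Max ((\<lambda>p. v \<bullet> fst p + snd p) `
      (\<lambda>s. (L *\<^sub>R s, - (a \<bullet> (L *\<^sub>R s)))) ` (Basis \<union> uminus ` Basis))" for v
  proof -
    have "L * infnorm (v - a) = infnorm (L *\<^sub>R (v - a))"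
      using assms by (simp add: infnorm_mul)
    then show ?thesis
      unfolding infnorm_eq_Max_signed_Basis image_image
      by (simp add: inner_diff_right inner_commute right_diff_distrib)
  qed
  then show ?thesis
    unfolding max_affine_def by (intro exI[of _ "(\<lambda>s. (L *\<^sub>R s, - (a \<bullet> (L *\<^sub>R s)))) ` (Basis \<union> uminus ` Basis)"]) auto
qed

lemma Max_add_sum_remove_diff:
  fixes f P :: "'t \<Rightarrow> 'b::linordered_ab_group_add"
  assumes "finite T" "T \<noteq> {}"
  shows "Max ((\<lambda>a. f a + (\<Sum>c\<in>T - {a}. P c)) ` T) - (\<Sum>c\<in>T. P c) = Max ((\<lambda>a. f a - P a) ` T)"
proof -
  have "(\<lambda>a. f a + (\<Sum>c\<in>T - {a}. P c)) ` T = (\<lambda>a. (f a - P a) + (\<Sum>c\<in>T. P c)) ` T"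
    using assms(1) by (intro image_cong) (simp_all add: sum.remove algebra_simps)
  then show ?thesis
    using assms by (simp add: Max_add_commute)
qed

lemma surj_on_atLeastAtMost_1:
  assumes "finite A" "A \<noteq> {}" "card A \<le> k"
  obtains \<phi> :: "nat \<Rightarrow> 'a" where "\<phi> ` {1..k} = A"
proof -
  obtain h where h: "bij_betw h {1..card A} A"
    using ex_bij_betw_nat_finite_1[OF assms(1)] by blast
  have "(\<lambda>j. min j (card A)) ` {1..k} = {1..card A}"
    using assms by (force simp: card_gt_0_iff Suc_le_eq)
  then have "(h \<circ> (\<lambda>j. min j (card A))) ` {1..k} = A"
    using h by (metis bij_betw_imp_surj_on image_comp)
  then show ?thesis by (rule that)
qed

lemma cone_penalty_upper:
  fixes v a :: "'a::euclidean_space"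
  assumes "\<bar>f v\<bar> \<le> M" "\<bar>f a\<bar> \<le> M" "dist v a < \<delta> \<Longrightarrow> \<bar>f a - f v\<bar> < \<epsilon>"
    and "2 * M * sqrt DIM('a) \<le> L * \<delta>" "\<delta> > 0" "L \<ge> 0" "\<epsilon> > 0"
  shows "f a - L * infnorm (v - a) < f v + \<epsilon>"
proof (cases "dist v a < \<delta>")
  case True
  moreover have "0 \<le> L * infnorm (v - a)" using assms(6) infnorm_pos_le[of "v - a"] by simp
  ultimately show ?thesis using assms(3) by linarith
next
  case False
  then have "\<delta> \<le> sqrt DIM('a) * infnorm (v - a)"
    using norm_le_infnorm[of "v - a"] by (simp add: dist_norm)
  then have "L * \<delta> \<le> sqrt DIM('a) * (L * infnorm (v - a))"
    using assms(6) by (metis mult.left_commute mult_left_mono)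
  with assms(4) have "sqrt DIM('a) * (2 * M) \<le> sqrt DIM('a) * (L * infnorm (v - a))"
    by (metis mult.commute order_trans)
  then have "2 * M \<le> L * infnorm (v - a)" by simp
  then show ?thesis using assms(1,2,7) by linarith
qed

lemma cone_envelope_approx:
  fixes f :: "'a::euclidean_space \<Rightarrow> real"
  assumes "compact C" "continuous_on C f" "\<epsilon> > 0" "C \<noteq> {}"
  obtains T L where "finite T" "T \<noteq> {}" "T \<subseteq> C" "L \<ge> 0"
    "\<And>v. v \<in> C \<Longrightarrow> \<bar>f v - Max ((\<lambda>a. f a - L * infnorm (v - a)) ` T)\<bar> < \<epsilon>"
proof -
  obtain M where M: "M > 0" "\<And>x. x \<in> C \<Longrightarrow> \<bar>f x\<bar> \<le> M"
    using compact_imp_bounded[OF compact_continuous_image[OF assms(2,1)]]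
    unfolding bounded_pos by auto
  obtain \<delta> where "\<delta> > 0"
    and \<delta>: "\<And>x y. x \<in> C \<Longrightarrow> y \<in> C \<Longrightarrow> dist y x < \<delta> \<Longrightarrow> \<bar>f y - f x\<bar> < \<epsilon> / 2"
    using compact_uniformly_continuous[OF assms(2,1)] assms(3)
    unfolding uniformly_continuous_on_def dist_real_def by (metis half_gt_zero)
  define L where "L = 2 * M * sqrt DIM('a) / \<delta>"
  have "L > 0" using M(1) \<open>\<delta> > 0\<close> by (simp add: L_def)
  define \<eta> where "\<eta> = min \<delta> (\<epsilon> / (2 * L))"
  have "\<eta> > 0" using \<open>\<delta> > 0\<close> \<open>L > 0\<close> assms(3) by (simp add: \<eta>_def)
  obtain T where T: "T \<subseteq> C" "finite T" "C \<subseteq> (\<Union>a\<in>T. ball a \<eta>)"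
    using compactE_image[OF assms(1), of C "\<lambda>x. ball x \<eta>"] \<open>\<eta> > 0\<close> by force
  have "T \<noteq> {}" using T(3) assms(4) by auto
  let ?P = "\<lambda>a v. L * infnorm (v - a)"
  have upper: "f a - ?P a v < f v + \<epsilon>" if "v \<in> C" "a \<in> T" for v a
    using that T(1) M(2) \<delta>[of v a] \<open>\<delta> > 0\<close> \<open>L > 0\<close> assms(3)
    by (intro cone_penalty_upper[where M = M and \<delta> = \<delta>]) (auto simp: L_def dist_commute)
  have lower: "f v - \<epsilon> < f a - ?P a v" if "v \<in> C" "a \<in> T" "dist v a < \<eta>" for v a
  proof -
    have "?P a v \<le> L * \<eta>"
      using that(3) infnorm_le_norm[of "v - a"] \<open>L > 0\<close> by (simp add: dist_norm)
    also have "\<dots> \<le> L * (\<epsilon> / (2 * L))"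
      using \<open>L > 0\<close> by (intro mult_left_mono) (simp_all add: \<eta>_def)
    also have "\<dots> = \<epsilon> / 2" using \<open>L > 0\<close> by simp
    finally have "?P a v \<le> \<epsilon> / 2" .
    moreover have "\<bar>f a - f v\<bar> < \<epsilon> / 2"
      using \<delta>[of v a] that T(1) by (auto simp: \<eta>_def dist_commute)
    ultimately show ?thesis by linarith
  qed
  show ?thesis
  proof (rule that[OF T(2) \<open>T \<noteq> {}\<close> T(1) less_imp_le[OF \<open>L > 0\<close>]])
    fix v assume "v \<in> C"
    then obtain a where "a \<in> T" "dist v a < \<eta>" using T(3) by (force simp: dist_commute)
    then have "f v - \<epsilon> < Max ((\<lambda>a. f a - ?P a v) ` T)"
      using lower[OF \<open>v \<in> C\<close>] T(2) by (force intro: less_le_trans)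
    moreover have "Max ((\<lambda>a. f a - ?P a v) ` T) < f v + \<epsilon>"
      using upper[OF \<open>v \<in> C\<close>] T(2) \<open>T \<noteq> {}\<close> by simp
    ultimately show "\<bar>f v - Max ((\<lambda>a. f a - ?P a v) ` T)\<bar> < \<epsilon>" by linarith
  qed
qed

lemma continuous_approx_by_diff_max_affine:
  fixes f :: "'a::euclidean_space \<Rightarrow> real"
  assumes "compact C" "continuous_on C f" "\<epsilon> > 0"
  obtains g h where "max_affine g" "max_affine h" "\<And>v. v \<in> C \<Longrightarrow> \<bar>f v - (g v - h v)\<bar> < \<epsilon>"
proof (cases "C = {}")
  case True
  then show ?thesis using that[OF max_affine_const max_affine_const] by blast
next
  case False
  then obtain T L where T: "finite T" "T \<noteq> {}" "T \<subseteq> C" and "L \<ge> 0"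
    and approx: "\<And>v. v \<in> C \<Longrightarrow> \<bar>f v - Max ((\<lambda>a. f a - L * infnorm (v - a)) ` T)\<bar> < \<epsilon>"
    using cone_envelope_approx[OF assms] by blast
  define h where "h v = (\<Sum>c\<in>T. L * infnorm (v - c))" for v
  define g where "g v = Max ((\<lambda>a. f a + (\<Sum>c\<in>T - {a}. L * infnorm (v - c))) ` T)" for v
  have "max_affine h"
    unfolding h_def using T(1) \<open>L \<ge> 0\<close> by (intro max_affine_sum max_affine_infnorm_cone)
  moreover have "max_affine g"
    unfolding g_def using T(1,2) \<open>L \<ge> 0\<close>
    by (intro max_affine_Max max_affine_add max_affine_const max_affine_sum max_affine_infnorm_cone) auto
  moreover have "g v - h v = Max ((\<lambda>a. f a - L * infnorm (v - a)) ` T)" for v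
    unfolding g_def h_def using T(1,2) by (rule Max_add_sum_remove_diff)
  ultimately show ?thesis using that approx by simp
qed

lemma max_affine_eq_maxout_unit:
  fixes h :: "real^'n \<Rightarrow> real"
  assumes "max_affine h"
  obtains k\<^sub>0 where "k\<^sub>0 > 0" "\<And>k. k \<ge> k\<^sub>0 \<Longrightarrow> \<exists>W b. \<forall>v. maxout_unit k W b v = h v"
proof -
  obtain A where A: "finite A" "A \<noteq> {}" "\<And>v. h v = Max ((\<lambda>p. v \<bullet> fst p + snd p) ` A)"
    using assms unfolding max_affine_def by blast
  have "\<exists>W b. \<forall>v. maxout_unit k W b v = h v" if k: "k \<ge> card A" for k
  proof -
    obtain \<phi> :: "nat \<Rightarrow> (real^'n) \<times> real" where \<phi>: "A = \<phi> ` {1..k}"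
      using surj_on_atLeastAtMost_1[OF A(1,2) k] by metis
    have "maxout_unit k (fst \<circ> \<phi>) (snd \<circ> \<phi>) v = h v" for v
      unfolding maxout_unit_def A(3) \<phi> image_image by simp
    then show ?thesis by blast
  qed
  moreover have "card A > 0" using A(1,2) by (simp add: card_gt_0_iff)
  ultimately show ?thesis using that by blast
qed

theorem theorem1:
  fixes C :: "(real^'n) set" and f :: "real^'n \<Rightarrow> real" and \<epsilon> :: real
  assumes "compact C" and "continuous_on C f" and "\<epsilon> > 0"
  shows "\<exists>k::nat. k > 0 \<and> (\<exists>(W::nat \<Rightarrow> nat \<Rightarrow> real^'n) (b::nat \<Rightarrow> nat \<Rightarrow> real) u1 u2 c.
           \<forall>v\<in>C. \<bar>f v - maxout_net2 k W b u1 u2 c v\<bar> < \<epsilon>)"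
proof -
  obtain g h where "max_affine g" "max_affine h"
    and approx: "\<And>v. v \<in> C \<Longrightarrow> \<bar>f v - (g v - h v)\<bar> < \<epsilon>"
    using continuous_approx_by_diff_max_affine[OF assms] by blast
  obtain k\<^sub>1 k\<^sub>2 where "k\<^sub>1 > 0"
    and k\<^sub>1: "\<And>k. k \<ge> k\<^sub>1 \<Longrightarrow> \<exists>W b. \<forall>v. maxout_unit k W b v = g v"
    and k\<^sub>2: "\<And>k. k \<ge> k\<^sub>2 \<Longrightarrow> \<exists>W b. \<forall>v. maxout_unit k W b v = h v"
    using max_affine_eq_maxout_unit[OF \<open>max_affine g\<close>] max_affine_eq_maxout_unit[OF \<open>max_affine h\<close>]
    by metis
  define k where "k = max k\<^sub>1 k\<^sub>2"
  obtain W\<^sub>1 b\<^sub>1 W\<^sub>2 b\<^sub>2 where "\<And>v. maxout_unit k W\<^sub>1 b\<^sub>1 v = g v" "\<And>v. maxout_unit k W\<^sub>2 b\<^sub>2 v = h v"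
    using k\<^sub>1[of k] k\<^sub>2[of k] by (auto simp: k_def)
  then have "maxout_net2 k (\<lambda>i. if i = 1 then W\<^sub>1 else W\<^sub>2) (\<lambda>i. if i = 1 then b\<^sub>1 else b\<^sub>2) 1 (-1) 0 v
      = g v - h v" for v
    by (simp add: maxout_net2_def)
  moreover have "k > 0" using \<open>k\<^sub>1 > 0\<close> by (simp add: k_def)
  ultimately show ?thesis using approx by metis
qed

end
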